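(* Let $\sigma=\begin{pmatrix}\frac13&0\\0&\frac23\end{pmatrix}$. There exists an extreme point of the convex set $\mathcal{CP}(M_2,M_2;\sigma,\sigma)$ of Kraus rank $2$.
   Context: $M_n$ denotes the complex $n\times n$ matrices. For positive semidefinite $A\in M_{d_1}$, $B\in M_{d_2}$, $\mathcal{CP}(M_{d_1},M_{d_2};A,B)$ is the convex set of completely positive maps $\Phi:M_{d_1}\to M_{d_2}$ with $\Phi(I_{d_1})=B$ and $\Phi^*(I_{d_2})=A$ ($\Phi^*$ the Hilbert–Schmidt adjoint); equivalently $\Phi(X)=\sum_iK_iXK_i^\dagger$ with $\sum_iK_i^\dagger K_i=A$, $\sum_iK_iK_i^\dagger=B$. An extreme point of a convex set $\mathcal{K}$ is an element not expressible as $t\Phi_1+(1-t)\Phi_2$ with $t\in(0,1)$ and distinct $\Phi_1,\Phi_2\in\mathcal{K}$. The Kraus rank of a completely positive map is the minimal number of Kraus operators in a Kraus decomposition (equal to the rank of its Choi matrix). *)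

theory Defs
  imports "HOL-Analysis.Analysis"
begin

type_synonym cmat2 = "complex^2^2"

definition cadj :: "cmat2 \<Rightarrow> cmat2" where
  "cadj A = (\<chi> i j. cnj (A $ j $ i))"

definition kraus_form :: "cmat2 list \<Rightarrow> (cmat2 \<Rightarrow> cmat2) \<Rightarrow> bool" where
  "kraus_form Ks \<Phi> \<longleftrightarrow> (\<forall>X. \<Phi> X = sum_list (map (\<lambda>K. K ** X ** cadj K) Ks))"

definition completely_positive :: "(cmat2 \<Rightarrow> cmat2) \<Rightarrow> bool" where
  "completely_positive \<Phi> \<longleftrightarrow> (\<exists>Ks. kraus_form Ks \<Phi>)"

definition hs_adjoint :: "(cmat2 \<Rightarrow> cmat2) \<Rightarrow> (cmat2 \<Rightarrow> cmat2)" where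
  "hs_adjoint \<Phi> = (THE \<Psi>. \<forall>X Y. trace (cadj (\<Psi> Y) ** X) = trace (cadj Y ** \<Phi> X))"

definition CP_set :: "cmat2 \<Rightarrow> cmat2 \<Rightarrow> (cmat2 \<Rightarrow> cmat2) set" where
  "CP_set A B = {\<Phi>. completely_positive \<Phi> \<and> \<Phi> (mat 1) = B \<and> hs_adjoint \<Phi> (mat 1) = A}"

definition is_extreme_point :: "(cmat2 \<Rightarrow> cmat2) \<Rightarrow> (cmat2 \<Rightarrow> cmat2) set \<Rightarrow> bool" where
  "is_extreme_point \<Phi> K \<longleftrightarrow> \<Phi> \<in> K \<and>
     \<not> (\<exists>t. t \<in> ({0<..<1}::real set) \<and> ( \<exists>P1 \<in> K. \<exists>P2 \<in> K. P1 \<noteq> P2 \<and>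
          \<Phi> = (\<lambda>X. t *\<^sub>R P1 X + (1 - t) *\<^sub>R P2 X)))"

definition kraus_rank :: "(cmat2 \<Rightarrow> cmat2) \<Rightarrow> nat" where
  "kraus_rank \<Phi> = (LEAST n. \<exists>Ks. length Ks = n \<and> kraus_form Ks \<Phi>)"

definition sigma :: cmat2 where
  "sigma = (\<chi> i j. if i = j then (if i = 0 then 1/3 else 2/3) else 0)"

end

theory Submission
  imports Defs
begin

text \<open>Let \<open>\<Phi>\<^sub>0 X = [[(x\<^sub>1\<^sub>1 + x\<^sub>2\<^sub>2)/3, x\<^sub>2\<^sub>1/3], [x\<^sub>1\<^sub>2/3, x\<^sub>1\<^sub>1/3]]\<close>, with Kraus operators
  \<open>E\<^sub>1\<^sub>1/\<surd>3\<close> and \<open>(E\<^sub>1\<^sub>2 + E\<^sub>2\<^sub>1)/\<surd>3\<close>; it is self-dual and maps \<open>I\<close> to \<open>\<sigma>\<close>.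
  For a weight \<open>w\<close> on matrix entries, the quadratic form of the Choi matrix at \<open>w\<close> equals
  \<open>\<Sum>\<^sub>L |\<langle>w, L\<rangle>|\<^sup>2\<close> over any Kraus decomposition, so it is a nonnegative linear functional on
  completely positive maps. Choosing the two weights that detect \<open>L\<^sub>2\<^sub>2\<close> and \<open>L\<^sub>2\<^sub>1 - L\<^sub>1\<^sub>2\<close>, both
  functionals vanish at \<open>\<Phi>\<^sub>0\<close>, hence at both summands of any convex splitting of \<open>\<Phi>\<^sub>0\<close>.
  Maps whose Kraus operators all have the shape \<open>[[a, b], [b, 0]]\<close> have a Choi matrix determined
  by the image of \<open>I\<close>, so both summands equal \<open>\<Phi>\<^sub>0\<close>. Finally the Choi matrix of \<open>\<Phi>\<^sub>0\<close> has a
  nonsingular \<open>2 \<times> 2\<close> minor, which rules out a single Kraus operator.\<close>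

lemma sum_list_vec_nth: "sum_list xs $ i = (\<Sum>x\<leftarrow>xs. x $ i)"
  by (induction xs) auto

lemma sum_list_sum_swap: "(\<Sum>x\<leftarrow>xs. \<Sum>i\<in>A. f x i) = (\<Sum>i\<in>A. \<Sum>x\<leftarrow>xs. f x i)"
  by (induction xs) (simp_all add: sum.distrib)

lemma of_real_sum_list: "of_real (\<Sum>x\<leftarrow>xs. f x) = (\<Sum>x\<leftarrow>xs. of_real (f x))"
  by (induction xs) auto

definition mat2 :: "complex \<Rightarrow> complex \<Rightarrow> complex \<Rightarrow> complex \<Rightarrow> cmat2" where
  "mat2 a b c d = (\<chi> i j. if i = 1 then (if j = 1 then a else b) else (if j = 1 then c else d))"

lemma mat2_nth [simp]:
  "mat2 a b c d $ 1 $ 1 = a" "mat2 a b c d $ 1 $ 2 = b"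
  "mat2 a b c d $ 2 $ 1 = c" "mat2 a b c d $ 2 $ 2 = d"
  by (simp_all add: mat2_def)

lemma cmat2_eq_iff:
  "(A::cmat2) = B \<longleftrightarrow> A$1$1 = B$1$1 \<and> A$1$2 = B$1$2 \<and> A$2$1 = B$2$1 \<and> A$2$2 = B$2$2"
  by (auto simp: vec_eq_iff forall_2)

lemma matrix_mult_nth [simp]: "((A::cmat2) ** B) $ i $ k = A$i$1 * B$1$k + A$i$2 * B$2$k"
  by (simp add: matrix_matrix_mult_def sum_2)

lemma cadj_nth [simp]: "cadj A $ i $ j = cnj (A $ j $ i)"
  by (simp add: cadj_def)

lemma trace_cmat2: "trace (A::cmat2) = A$1$1 + A$2$2"
  by (simp add: trace_def sum_2)

lemma mat1_nth [simp]:
  "(mat 1 :: cmat2) $ 1 $ 1 = 1" "(mat 1 :: cmat2) $ 1 $ 2 = 0"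
  "(mat 1 :: cmat2) $ 2 $ 1 = 0" "(mat 1 :: cmat2) $ 2 $ 2 = 1"
  by (simp_all add: mat_def)

text \<open>The indices of type \<open>2\<close> are \<open>1\<close> and \<open>2 = 0\<close>, so the entry \<open>1/3\<close> at index \<open>0\<close> in the
  definition of \<open>sigma\<close> is \<open>sigma $ 2 $ 2\<close>.\<close>

lemma sigma_nth [simp]:
  "sigma $ 1 $ 1 = 2/3" "sigma $ 1 $ 2 = 0" "sigma $ 2 $ 1 = 0" "sigma $ 2 $ 2 = 1/3"
  by (simp_all add: sigma_def)

lemma kraus_form_nth:
  "kraus_form Ls \<Psi> \<Longrightarrow> \<Psi> X $ i $ k = (\<Sum>L\<leftarrow>Ls. (L ** X ** cadj L) $ i $ k)"
  unfolding kraus_form_def by (simp add: sum_list_vec_nth o_def)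

definition matrix_unit :: "2 \<Rightarrow> 2 \<Rightarrow> cmat2" where
  "matrix_unit j l = (\<chi> a b. if a = j \<and> b = l then 1 else 0)"

definition choi :: "(cmat2 \<Rightarrow> cmat2) \<Rightarrow> 2 \<Rightarrow> 2 \<Rightarrow> 2 \<Rightarrow> 2 \<Rightarrow> complex" where
  "choi \<Psi> i j k l = \<Psi> (matrix_unit j l) $ i $ k"

lemma matrix_unit_conjugate_nth: "(L ** matrix_unit j l ** cadj L) $ i $ k = L$i$j * cnj (L$k$l)"
  using exhaust_2[of j] exhaust_2[of l] by (auto simp: matrix_unit_def)

lemma kraus_form_choi:
  "kraus_form Ls \<Psi> \<Longrightarrow> choi \<Psi> i j k l = (\<Sum>L\<leftarrow>Ls. L$i$j * cnj (L$k$l))"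
  unfolding choi_def by (simp only: kraus_form_nth matrix_unit_conjugate_nth)

lemma kraus_form_apply:
  assumes "kraus_form Ls \<Psi>"
  shows "\<Psi> X $ i $ k = (\<Sum>j\<in>UNIV. \<Sum>l\<in>UNIV. X$j$l * choi \<Psi> i j k l)"
proof -
  have "\<Psi> X $ i $ k = (\<Sum>L\<leftarrow>Ls. \<Sum>j\<in>UNIV. \<Sum>l\<in>UNIV. X$j$l * (L$i$j * cnj (L$k$l)))"
    using kraus_form_nth[OF assms] by (simp add: sum_2 algebra_simps)
  also have "\<dots> = (\<Sum>j\<in>UNIV. \<Sum>l\<in>UNIV. X$j$l * choi \<Psi> i j k l)"
    by (simp add: kraus_form_choi[OF assms] sum_list_sum_swap sum_list_const_mult)
  finally show ?thesis .
qed

definition choi_form :: "(2 \<Rightarrow> 2 \<Rightarrow> complex) \<Rightarrow> (cmat2 \<Rightarrow> cmat2) \<Rightarrow> complex" where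
  "choi_form w \<Psi> =
     (\<Sum>i\<in>UNIV. \<Sum>j\<in>UNIV. \<Sum>k\<in>UNIV. \<Sum>l\<in>UNIV. w i j * cnj (w k l) * choi \<Psi> i j k l)"

lemma choi_form_kraus:
  assumes "kraus_form Ls \<Psi>"
  shows "choi_form w \<Psi> = of_real (\<Sum>L\<leftarrow>Ls. (cmod (\<Sum>i\<in>UNIV. \<Sum>j\<in>UNIV. w i j * L$i$j))\<^sup>2)"
proof -
  have "choi_form w \<Psi> = (\<Sum>L\<leftarrow>Ls. \<Sum>i\<in>UNIV. \<Sum>j\<in>UNIV. \<Sum>k\<in>UNIV. \<Sum>l\<in>UNIV.
      (w i j * L$i$j) * cnj (w k l * L$k$l))"
    by (simp add: choi_form_def kraus_form_choi[OF assms] sum_list_sum_swap sum_list_const_mult mult_ac)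
  also have "\<dots> = (\<Sum>L\<leftarrow>Ls. (\<Sum>i\<in>UNIV. \<Sum>j\<in>UNIV. w i j * L$i$j) *
      cnj (\<Sum>k\<in>UNIV. \<Sum>l\<in>UNIV. w k l * L$k$l))"
    unfolding cnj_sum sum_distrib_right by (simp only: sum_distrib_left)
  finally show ?thesis
    by (simp only: of_real_sum_list complex_norm_square)
qed

lemma choi_form_eq_0_iff:
  assumes "kraus_form Ls \<Psi>"
  shows "choi_form w \<Psi> = 0 \<longleftrightarrow> (\<forall>L\<in>set Ls. (\<Sum>i\<in>UNIV. \<Sum>j\<in>UNIV. w i j * L$i$j) = 0)"
  unfolding choi_form_kraus[OF assms] of_real_eq_0_iff by (subst sum_list_nonneg_eq_0_iff) auto

lemma choi_form_scaleR_add: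
  "choi_form w (\<lambda>X. a *\<^sub>R P X + b *\<^sub>R Q X) = of_real a * choi_form w P + of_real b * choi_form w Q"
  unfolding choi_form_def choi_def vector_add_component vector_scaleR_component
  by (simp add: scaleR_conv_of_real sum.distrib sum_distrib_left algebra_simps)

lemma choi_form_nonneg:
  assumes "completely_positive \<Psi>"
  obtains r where "r \<ge> 0" "choi_form w \<Psi> = of_real r"
proof -
  obtain Ls where "kraus_form Ls \<Psi>"
    using assms unfolding completely_positive_def by blast
  show thesis
    by (rule that[OF _ choi_form_kraus[OF \<open>kraus_form Ls \<Psi>\<close>]], rule sum_list_nonneg) auto
qed

lemma choi_form_eq_0_convex_combination:
  assumes "completely_positive P" "completely_positive Q" "0 < t" "t < 1"
    and "choi_form w (\<lambda>X. t *\<^sub>R P X + (1 - t) *\<^sub>R Q X) = 0"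
  shows "choi_form w P = 0" "choi_form w Q = 0"
proof -
  obtain p q where pq: "p \<ge> 0" "q \<ge> 0" "choi_form w P = of_real p" "choi_form w Q = of_real q"
    using choi_form_nonneg assms(1,2) by metis
  have "of_real (t * p + (1 - t) * q) = (0::complex)"
    using assms(5) pq(3,4) by (simp add: choi_form_scaleR_add)
  then have "t * p + (1 - t) * q = 0"
    by (simp only: of_real_eq_0_iff)
  moreover have "t * p \<ge> 0" "(1 - t) * q \<ge> 0"
    using assms(3,4) pq(1,2) by simp_all
  ultimately have "t * p = 0" "(1 - t) * q = 0"
    by linarith+
  then have "p = 0" "q = 0"
    using assms(3,4) by simp_all
  then show "choi_form w P = 0" "choi_form w Q = 0"
    using pq by simp_all
qed

definition Phi0 :: "cmat2 \<Rightarrow> cmat2" where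
  "Phi0 X = mat2 ((X$1$1 + X$2$2) / 3) (X$2$1 / 3) (X$1$2 / 3) (X$1$1 / 3)"

definition K1 :: cmat2 where
  "K1 = mat2 (sqrt (1/3)) 0 0 0"

definition K2 :: cmat2 where
  "K2 = mat2 0 (sqrt (1/3)) (sqrt (1/3)) 0"

lemma sqrt_third_mult_sqrt_third:
  "complex_of_real (sqrt (1/3)) * (complex_of_real (sqrt (1/3)) * x) = x / 3"
  "complex_of_real (sqrt (1/3)) * x * complex_of_real (sqrt (1/3)) = x / 3"
proof -
  have "complex_of_real (sqrt (1/3)) * complex_of_real (sqrt (1/3)) = 1/3"
    by (simp flip: of_real_mult)
  then show "complex_of_real (sqrt (1/3)) * (complex_of_real (sqrt (1/3)) * x) = x / 3"
    by (simp add: mult.assoc[symmetric])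
  then show "complex_of_real (sqrt (1/3)) * x * complex_of_real (sqrt (1/3)) = x / 3"
    by (simp add: mult_ac)
qed

lemma Phi0_kraus_form: "kraus_form [K1, K2] Phi0"
  unfolding kraus_form_def
  by (simp add: cmat2_eq_iff Phi0_def K1_def K2_def sqrt_third_mult_sqrt_third add_divide_distrib)

lemma Phi0_mat1: "Phi0 (mat 1) = sigma"
  by (simp add: cmat2_eq_iff Phi0_def)

lemma cmat2_eq_if_trace_eq:
  assumes "\<And>X. trace (cadj A ** X) = trace (cadj B ** (X::cmat2))"
  shows "A = B"
proof -
  have "cnj (A$i$j) = cnj (B$i$j)" for i j
    using assms[of "matrix_unit i j"] exhaust_2[of i] exhaust_2[of j]
    by (auto simp: trace_cmat2 matrix_unit_def)
  then show ?thesis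
    by (simp add: cmat2_eq_iff)
qed

lemma hs_adjoint_eqI:
  assumes "\<And>X Y. trace (cadj (\<Psi> Y) ** X) = trace (cadj Y ** \<Phi> X)"
  shows "hs_adjoint \<Phi> = \<Psi>"
  unfolding hs_adjoint_def
proof (rule the_equality)
  fix \<Psi>' assume "\<forall>X Y. trace (cadj (\<Psi>' Y) ** X) = trace (cadj Y ** \<Phi> X)"
  then show "\<Psi>' = \<Psi>"
    using assms by (auto intro!: cmat2_eq_if_trace_eq)
qed (use assms in blast)

lemma hs_adjoint_Phi0: "hs_adjoint Phi0 = Phi0"
  by (rule hs_adjoint_eqI) (simp add: trace_cmat2 Phi0_def algebra_simps add_divide_distrib)

lemma Phi0_in_CP_set: "Phi0 \<in> CP_set sigma sigma"
  using Phi0_kraus_form Phi0_mat1 hs_adjoint_Phi0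
  unfolding CP_set_def completely_positive_def by auto

definition corner_weight :: "2 \<Rightarrow> 2 \<Rightarrow> complex" where
  "corner_weight i j = of_bool (i = 2 \<and> j = 2)"

definition antisymmetric_weight :: "2 \<Rightarrow> 2 \<Rightarrow> complex" where
  "antisymmetric_weight i j = of_bool (i = 2 \<and> j = 1) - of_bool (i = 1 \<and> j = 2)"

lemma choi_form_weights_eq_0_iff:
  assumes "kraus_form Ls \<Psi>"
  shows "choi_form corner_weight \<Psi> = 0 \<and> choi_form antisymmetric_weight \<Psi> = 0 \<longleftrightarrow>
    (\<forall>L\<in>set Ls. L$2$2 = 0 \<and> L$2$1 = L$1$2)"
  by (auto simp: choi_form_eq_0_iff[OF assms] corner_weight_def antisymmetric_weight_def sum_2)

lemma choi_form_weights_Phi0: "choi_form corner_weight Phi0 = 0" "choi_form antisymmetric_weight Phi0 = 0"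
  using choi_form_weights_eq_0_iff[OF Phi0_kraus_form] by (simp_all add: K1_def K2_def)

lemma choi_kraus_zero_corner_symmetric:
  assumes "kraus_form Ls \<Psi>" "\<forall>L\<in>set Ls. L$2$2 = 0 \<and> L$2$1 = L$1$2"
  shows "choi \<Psi> 2 2 k l = 0" "choi \<Psi> i j 2 2 = 0"
    "choi \<Psi> 2 1 k l = choi \<Psi> 1 2 k l" "choi \<Psi> i j 2 1 = choi \<Psi> i j 1 2"
  using assms(2) by (simp_all add: kraus_form_choi[OF assms(1)] cong: map_cong)

lemma eq_Phi0_if_kraus_zero_corner_symmetric:
  assumes \<Psi>: "kraus_form Ls \<Psi>" and Ls: "\<forall>L\<in>set Ls. L$2$2 = 0 \<and> L$2$1 = L$1$2"
    and unital: "\<Psi> (mat 1) = sigma"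
  shows "\<Psi> = Phi0"
proof -
  note choi = choi_kraus_zero_corner_symmetric[OF \<Psi> Ls]
  have expansion: "\<Psi> X $ i $ k = X$1$1 * choi \<Psi> i 1 k 1 + X$1$2 * choi \<Psi> i 1 k 2
      + X$2$1 * choi \<Psi> i 2 k 1 + X$2$2 * choi \<Psi> i 2 k 2" for X i k
    by (simp add: kraus_form_apply[OF \<Psi>] sum_2)
  have "sigma $ i $ k = choi \<Psi> i 1 k 1 + choi \<Psi> i 2 k 2" for i k
    using expansion[of "mat 1" i k] unital by simp
  from this[of 1 1] this[of 1 2] this[of 2 1] this[of 2 2]
  have choi_values: "choi \<Psi> 1 1 1 1 = 1/3" "choi \<Psi> 1 1 1 2 = 0" "choi \<Psi> 1 2 1 1 = 0" "choi \<Psi> 1 2 1 2 = 1/3"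
    by (simp_all add: choi)
  show ?thesis
    by (intro ext) (simp add: cmat2_eq_iff expansion Phi0_def choi choi_values add_divide_distrib)
qed

lemma eq_Phi0_if_choi_forms_vanish:
  assumes "completely_positive \<Psi>" "\<Psi> (mat 1) = sigma"
    and "choi_form corner_weight \<Psi> = 0" "choi_form antisymmetric_weight \<Psi> = 0"
  shows "\<Psi> = Phi0"
proof -
  obtain Ls where Ls: "kraus_form Ls \<Psi>"
    using assms(1) unfolding completely_positive_def by blast
  show ?thesis
    using eq_Phi0_if_kraus_zero_corner_symmetric[OF Ls] choi_form_weights_eq_0_iff[OF Ls] assms(2-4) by blast
qed

lemma is_extreme_point_Phi0: "is_extreme_point Phi0 (CP_set sigma sigma)"
  unfolding is_extreme_point_def
proof (intro conjI notI)
  show "Phi0 \<in> CP_set sigma sigma"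
    by (rule Phi0_in_CP_set)
next
  assume "\<exists>t. t \<in> {0<..<1} \<and> (\<exists>P1\<in>CP_set sigma sigma. \<exists>P2\<in>CP_set sigma sigma. P1 \<noteq> P2 \<and>
    Phi0 = (\<lambda>X. t *\<^sub>R P1 X + (1 - t) *\<^sub>R P2 X))"
  then obtain t P1 P2 where t: "0 < t" "t < 1" and P: "P1 \<in> CP_set sigma sigma" "P2 \<in> CP_set sigma sigma"
    and "P1 \<noteq> P2" and Phi0: "Phi0 = (\<lambda>X. t *\<^sub>R P1 X + (1 - t) *\<^sub>R P2 X)"
    by auto
  have cp: "completely_positive P1" "completely_positive P2"
    and unital: "P1 (mat 1) = sigma" "P2 (mat 1) = sigma"
    using P by (simp_all add: CP_set_def)
  have "choi_form w P1 = 0 \<and> choi_form w P2 = 0" if "choi_form w Phi0 = 0" for w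
    using choi_form_eq_0_convex_combination[OF cp t that[unfolded Phi0]] by blast
  then have "P1 = Phi0" "P2 = Phi0"
    using eq_Phi0_if_choi_forms_vanish cp unital choi_form_weights_Phi0 by blast+
  with \<open>P1 \<noteq> P2\<close> show False
    by simp
qed

lemma kraus_form_singleton_choi_minor:
  "kraus_form [L] \<Psi> \<Longrightarrow> choi \<Psi> i j i j * choi \<Psi> k l k l = choi \<Psi> i j k l * choi \<Psi> k l i j"
  by (simp add: kraus_form_choi mult_ac)

lemma choi_Phi0: "choi Phi0 1 1 1 1 = 1/3" "choi Phi0 1 2 1 2 = 1/3" "choi Phi0 1 1 1 2 = 0"
  by (simp_all add: choi_def Phi0_def matrix_unit_def)

lemma kraus_rank_Phi0: "kraus_rank Phi0 = 2"
  unfolding kraus_rank_def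
proof (rule Least_equality)
  show "\<exists>Ks. length Ks = 2 \<and> kraus_form Ks Phi0"
    using Phi0_kraus_form by (intro exI[of _ "[K1, K2]"]) simp
next
  fix n assume "\<exists>Ks. length Ks = n \<and> kraus_form Ks Phi0"
  then obtain Ks where "length Ks = n" and Ks: "kraus_form Ks Phi0"
    by blast
  show "2 \<le> n"
  proof (rule ccontr)
    assume "\<not> 2 \<le> n"
    with \<open>length Ks = n\<close> consider "Ks = []" | L where "Ks = [L]"
      by (cases Ks) (auto simp: not_le)
    then show False
    proof cases
      case 1
      then show False
        using kraus_form_choi[OF Ks, of 1 1 1 1] choi_Phi0 by simp
    next
      case 2
      then show False
        using kraus_form_singleton_choi_minor[of L Phi0 1 1 1 2] Ks choi_Phi0 by simp
    qed
  qed
qed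

theorem mainTheorem7:
  shows "\<exists>\<Phi>. is_extreme_point \<Phi> (CP_set sigma sigma) \<and> kraus_rank \<Phi> = 2"
  using is_extreme_point_Phi0 kraus_rank_Phi0 by blast

end
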